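(* Let $K$ be a field of characteristic $0$, $e\ge 2$, $A,B\in M_e(K)$, $d\in(\mathbb{Z}/e\mathbb{Z})^\times$, and let $\mathcal{K}=[\delta_{i+1,j}]_{0\le i,j\le e-1}\in M_e(K)$ be the circulant matrix (indices modulo $e$). For $0\le l\le e-1$: (i) $\mathcal{K}^l(A\overset{d}{\ast}B)=A\overset{d}{\ast}(\mathcal{K}^lB)=(\mathcal{K}^{-d^{-1}l}A)\overset{d}{\ast}B$; (ii) $(A\overset{d}{\ast}B)\mathcal{K}^l=A\overset{d}{\ast}(B\mathcal{K}^l)=(A\mathcal{K}^{-d^{-1}l})\overset{d}{\ast}B$.
   Context: For $A=[a_{i,j}],B=[b_{i,j}]\in M_e(K)$ (indices modulo $e$) and $d\in(\mathbb{Z}/e\mathbb{Z})\setminus\{0\}$, the $d$-composition is $A\overset{d}{\ast}B=\big[\sum_{s=0}^{e-1}\sum_{t=0}^{e-1}a_{s,t}b_{ds+i,dt+j}\big]_{0\le i,j\le e-1}$. Here $\delta$ is Kronecker's delta, and $d^{-1}$ is the inverse of $d$ in $\mathbb{Z}/e\mathbb{Z}$. *)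

theory Defs
  imports Main
begin

text \<open>An e x e matrix over K is represented as a function nat => nat => K; only the
entries with indices in {0..<e} matter. Indices are read modulo e.\<close>

definition mat_eq :: "nat \<Rightarrow> (nat \<Rightarrow> nat \<Rightarrow> 'a) \<Rightarrow> (nat \<Rightarrow> nat \<Rightarrow> 'a) \<Rightarrow> bool" where
  "mat_eq e A B \<longleftrightarrow> (\<forall>i<e. \<forall>j<e. A i j = B i j)"

definition mat_mul :: "nat \<Rightarrow> (nat \<Rightarrow> nat \<Rightarrow> 'a::comm_ring_1) \<Rightarrow> (nat \<Rightarrow> nat \<Rightarrow> 'a) \<Rightarrow> nat \<Rightarrow> nat \<Rightarrow> 'a" where
  "mat_mul e A B = (\<lambda>i j. \<Sum>k<e. A i k * B k j)"

definition mat_id :: "nat \<Rightarrow> nat \<Rightarrow> 'a::comm_ring_1" where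
  "mat_id = (\<lambda>i j. if i = j then 1 else 0)"

fun mat_pow :: "nat \<Rightarrow> (nat \<Rightarrow> nat \<Rightarrow> 'a::comm_ring_1) \<Rightarrow> nat \<Rightarrow> nat \<Rightarrow> nat \<Rightarrow> 'a" where
  "mat_pow e A 0 = mat_id"
| "mat_pow e A (Suc n) = mat_mul e A (mat_pow e A n)"

definition circ :: "nat \<Rightarrow> nat \<Rightarrow> nat \<Rightarrow> 'a::comm_ring_1" where
  "circ e = (\<lambda>i j. if (i + 1) mod e = j mod e then 1 else 0)"

text \<open>Power of the circulant with integer exponent m; since circ^e = I,
 circ^m = circ^(m mod e).\<close>
definition circ_zpow :: "nat \<Rightarrow> int \<Rightarrow> nat \<Rightarrow> nat \<Rightarrow> 'a::comm_ring_1" where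
  "circ_zpow e m = mat_pow e (circ e) (nat (m mod int e))"

definition dcomp :: "nat \<Rightarrow> int \<Rightarrow> (nat \<Rightarrow> nat \<Rightarrow> 'a::comm_ring_1) \<Rightarrow> (nat \<Rightarrow> nat \<Rightarrow> 'a) \<Rightarrow> nat \<Rightarrow> nat \<Rightarrow> 'a" where
  "dcomp e d A B = (\<lambda>i j. \<Sum>s<e. \<Sum>t<e.
      A s t * B (nat ((d * int s + int i) mod int e)) (nat ((d * int t + int j) mod int e)))"

end

theory Submission
  imports Defs
begin

text \<open>Left multiplication by \<open>\<K>\<^sup>l\<close> shifts the rows of a matrix by \<open>l\<close> (indices modulo \<open>e\<close>),
right multiplication shifts its columns by \<open>-l\<close>. In \<open>A \<ast>\<^sub>d B\<close> the row index \<open>i\<close> only enters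
through the row index \<open>ds + i\<close> of \<open>B\<close>, so shifting the rows of \<open>B\<close> by \<open>c\<close> shifts the rows of
the composition by \<open>c\<close>. Shifting the rows of \<open>A\<close> by \<open>-d\<inverse>c\<close> and substituting
\<open>s' = s - d\<inverse>c\<close> in the sum turns \<open>ds + i\<close> into \<open>ds' + c + i\<close>: the same shift. The column
statements follow by transposition, since transposing both factors transposes the composition.\<close>

lemma mat_eq_refl: "mat_eq e A A"
  by (simp add: mat_eq_def)

definition row_shift :: "nat \<Rightarrow> int \<Rightarrow> (nat \<Rightarrow> nat \<Rightarrow> 'a) \<Rightarrow> nat \<Rightarrow> nat \<Rightarrow> 'a" where
  "row_shift e c M = (\<lambda>i j. M (nat ((int i + c) mod int e)) j)"

definition col_shift :: "nat \<Rightarrow> int \<Rightarrow> (nat \<Rightarrow> nat \<Rightarrow> 'a) \<Rightarrow> nat \<Rightarrow> nat \<Rightarrow> 'a" where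
  "col_shift e c M = (\<lambda>i j. M i (nat ((int j + c) mod int e)))"

lemma mod_add_eq_iff_eq_mod_diff:
  fixes k j c e :: int
  assumes "0 \<le> k" "k < e" "0 \<le> j" "j < e"
  shows "(k + c) mod e = j \<longleftrightarrow> k = (j - c) mod e"
proof -
  have "(k + c) mod e = j \<longleftrightarrow> (k + c) mod e = j mod e"
    using assms by simp
  also have "\<dots> \<longleftrightarrow> k mod e = (j - c) mod e"
    by (simp add: mod_eq_dvd_iff algebra_simps)
  also have "\<dots> \<longleftrightarrow> k = (j - c) mod e"
    using assms by simp
  finally show ?thesis .
qed

lemma mod_mult_inverse_cancel:
  fixes d dinv s c e :: int
  assumes "(d * dinv) mod e = 1"
  shows "(d * ((s - dinv * c) mod e) + c) mod e = (d * s) mod e"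
proof -
  have "(d * dinv * c) mod e = c mod e"
    using assms by (metis mod_mult_left_eq mult_1)
  have "(d * ((s - dinv * c) mod e) + c) mod e = (d * s - d * dinv * c + c) mod e"
    by (metis mod_add_left_eq mod_mult_right_eq right_diff_distrib mult.assoc)
  also have "\<dots> = (d * s - c + c) mod e"
    using \<open>(d * dinv * c) mod e = c mod e\<close> by (metis mod_add_cong mod_diff_cong)
  finally show ?thesis by simp
qed

lemma sum_lessThan_mod_shift:
  assumes "0 < e"
  shows "(\<Sum>s<e. g (nat ((int s + c) mod int e))) = (\<Sum>s<e. g s)"
proof (rule sum.reindex_bij_witness[of _ "\<lambda>s. nat ((int s - c) mod int e)" "\<lambda>s. nat ((int s + c) mod int e)"])
  fix s assume "s \<in> {..<e}"
  with assms show "nat ((int (nat ((int s + c) mod int e)) - c) mod int e) = s"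
    by (simp add: mod_diff_left_eq)
  from \<open>s \<in> {..<e}\<close> assms show "nat ((int (nat ((int s - c) mod int e)) + c) mod int e) = s"
    by (simp add: mod_add_left_eq)
qed (use assms in \<open>simp_all add: nat_less_iff\<close>)

lemma mat_pow_circ:
  fixes e l i j :: nat
  assumes "i < e" "j < e"
  shows "mat_pow e (circ e) l i j = (if (int i + int l) mod int e = int j then 1 else (0::'a::comm_ring_1))"
  using assms
proof (induction l arbitrary: i)
  case 0
  then show ?case by (simp add: mat_id_def)
next
  case (Suc l)
  have "mat_pow e (circ e) (Suc l) i j
      = (\<Sum>k<e. if k = (i + 1) mod e then mat_pow e (circ e) l k j else (0::'a))"
    unfolding mat_pow.simps mat_mul_def
    by (rule sum.cong) (auto simp: circ_def \<open>i < e\<close>)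
  also have "\<dots> = mat_pow e (circ e) l ((i + 1) mod e) j"
    using \<open>i < e\<close> by simp
  also have "\<dots> = (if (int ((i + 1) mod e) + int l) mod int e = int j then 1 else (0::'a))"
    using Suc.prems by (intro Suc.IH) auto
  also have "(int ((i + 1) mod e) + int l) mod int e = (int i + int (Suc l)) mod int e"
    by (simp add: zmod_int mod_add_left_eq mod_add_right_eq add_ac)
  finally show ?case .
qed

lemma mat_mul_circ_pow_left:
  "mat_eq e (mat_mul e (mat_pow e (circ e) l) M) (row_shift e (int l) M)"
  unfolding mat_eq_def
proof (intro allI impI)
  fix i j assume "i < e" "j < e"
  have "mat_mul e (mat_pow e (circ e) l) M i j
      = (\<Sum>k<e. if k = nat ((int i + int l) mod int e) then M k j else 0)"
    unfolding mat_mul_def by (rule sum.cong) (auto simp: mat_pow_circ \<open>i < e\<close>)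
  also have "\<dots> = row_shift e (int l) M i j"
    using \<open>i < e\<close> by (simp add: row_shift_def nat_less_iff)
  finally show "mat_mul e (mat_pow e (circ e) l) M i j = row_shift e (int l) M i j" .
qed

lemma mat_mul_circ_pow_right:
  "mat_eq e (mat_mul e M (mat_pow e (circ e) l)) (col_shift e (- int l) M)"
  unfolding mat_eq_def
proof (intro allI impI)
  fix i j assume "i < e" "j < e"
  have "mat_mul e M (mat_pow e (circ e) l) i j
      = (\<Sum>k<e. if k = nat ((int j - int l) mod int e) then M i k else 0)"
    unfolding mat_mul_def
  proof (rule sum.cong)
    fix k assume "k \<in> {..<e}"
    then have "(int k + int l) mod int e = int j \<longleftrightarrow> k = nat ((int j - int l) mod int e)"
      using \<open>j < e\<close> mod_add_eq_iff_eq_mod_diff[of "int k" "int e" "int j" "int l"] by auto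
    then show "M i k * mat_pow e (circ e) l k j
        = (if k = nat ((int j - int l) mod int e) then M i k else 0)"
      using \<open>k \<in> {..<e}\<close> \<open>j < e\<close> by (simp add: mat_pow_circ)
  qed simp
  also have "\<dots> = col_shift e (- int l) M i j"
    using \<open>j < e\<close> by (simp add: col_shift_def nat_less_iff)
  finally show "mat_mul e M (mat_pow e (circ e) l) i j = col_shift e (- int l) M i j" .
qed

lemma mat_mul_circ_zpow_left:
  "mat_eq e (mat_mul e (circ_zpow e m) M) (row_shift e m M)"
proof (cases "e = 0")
  case False
  then have "row_shift e (int (nat (m mod int e))) M = row_shift e m M"
    by (simp add: row_shift_def mod_add_right_eq)
  then show ?thesis
    using mat_mul_circ_pow_left[of e "nat (m mod int e)" M] by (simp add: circ_zpow_def)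
qed (simp add: mat_eq_def)

lemma mat_mul_circ_zpow_right:
  "mat_eq e (mat_mul e M (circ_zpow e m)) (col_shift e (- m) M)"
proof (cases "e = 0")
  case False
  then have "col_shift e (- int (nat (m mod int e))) M = col_shift e (- m) M"
    by (simp add: col_shift_def mod_diff_right_eq)
  then show ?thesis
    using mat_mul_circ_pow_right[of e M "nat (m mod int e)"] by (simp add: circ_zpow_def)
qed (simp add: mat_eq_def)

lemma dcomp_cong:
  assumes "mat_eq e A A'" "mat_eq e B B'"
  shows "dcomp e d A B = dcomp e d A' B'"
proof (cases "e = 0")
  case False
  then show ?thesis
    using assms unfolding mat_eq_def dcomp_def by (intro ext sum.cong refl) (simp add: nat_less_iff)
qed (simp add: dcomp_def)

lemma dcomp_transpose:
  "dcomp e d (\<lambda>i j. A j i) (\<lambda>i j. B j i) = (\<lambda>i j. dcomp e d A B j i)"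
  unfolding dcomp_def by (intro ext) (rule sum.swap)

lemma dcomp_row_shift_right:
  "dcomp e d A (row_shift e c B) = row_shift e c (dcomp e d A B)"
proof (cases "e = 0")
  case False
  have "((x + int i) mod int e + c) mod int e = (x + (int i + c) mod int e) mod int e"
    for x :: int and i
    by (simp add: mod_add_left_eq mod_add_right_eq add.assoc)
  with False show ?thesis
    unfolding dcomp_def row_shift_def by (intro ext sum.cong refl) simp
qed (simp add: dcomp_def row_shift_def)

lemma dcomp_col_shift_right:
  "dcomp e d A (col_shift e c B) = col_shift e c (dcomp e d A B)"
proof -
  have "dcomp e d A (col_shift e c B)
      = (\<lambda>i j. dcomp e d (\<lambda>i j. A j i) (row_shift e c (\<lambda>i j. B j i)) j i)"
    using dcomp_transpose[of e d "\<lambda>i j. A j i" "row_shift e c (\<lambda>i j. B j i)"]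
    by (simp add: row_shift_def col_shift_def)
  also have "\<dots> = (\<lambda>i j. row_shift e c (dcomp e d (\<lambda>i j. A j i) (\<lambda>i j. B j i)) j i)"
    by (simp only: dcomp_row_shift_right)
  also have "\<dots> = col_shift e c (dcomp e d A B)"
    by (simp add: dcomp_transpose[of e d A B] row_shift_def col_shift_def)
  finally show ?thesis .
qed

lemma dcomp_row_shift_left:
  assumes "0 < e" and inverse: "(d * dinv) mod int e = 1"
  shows "dcomp e d (row_shift e (- dinv * c) A) B = row_shift e c (dcomp e d A B)"
proof (intro ext)
  fix i j
  define H where "H s = (\<Sum>t<e. A s t * B (nat ((d * int s + (int i + c)) mod int e))
    (nat ((d * int t + int j) mod int e)))" for s
  have shift: "(d * int (nat ((int s + - dinv * c) mod int e)) + (int i + c)) mod int e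
      = (d * int s + int i) mod int e" for s
  proof -
    have "(d * ((int s - dinv * c) mod int e) + c + int i) mod int e
        = ((d * ((int s - dinv * c) mod int e) + c) mod int e + int i) mod int e"
      by (simp add: mod_add_left_eq)
    also have "\<dots> = (d * int s + int i) mod int e"
      by (simp add: mod_mult_inverse_cancel[OF inverse] mod_add_left_eq)
    finally show ?thesis
      using \<open>0 < e\<close> by (simp add: algebra_simps)
  qed
  have "dcomp e d (row_shift e (- dinv * c) A) B i j
      = (\<Sum>s<e. H (nat ((int s + - dinv * c) mod int e)))"
    unfolding dcomp_def row_shift_def H_def shift ..
  also have "\<dots> = (\<Sum>s<e. H s)"
    by (rule sum_lessThan_mod_shift[OF \<open>0 < e\<close>])
  also have "\<dots> = row_shift e c (dcomp e d A B) i j"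
    unfolding H_def dcomp_def row_shift_def using \<open>0 < e\<close> by (simp add: mod_add_right_eq add.assoc)
  finally show "dcomp e d (row_shift e (- dinv * c) A) B i j = row_shift e c (dcomp e d A B) i j" .
qed

lemma dcomp_col_shift_left:
  assumes "0 < e" and "(d * dinv) mod int e = 1"
  shows "dcomp e d (col_shift e (- dinv * c) A) B = col_shift e c (dcomp e d A B)"
proof -
  have "dcomp e d (col_shift e (- dinv * c) A) B
      = (\<lambda>i j. dcomp e d (row_shift e (- dinv * c) (\<lambda>i j. A j i)) (\<lambda>i j. B j i) j i)"
    using dcomp_transpose[of e d "row_shift e (- dinv * c) (\<lambda>i j. A j i)" "\<lambda>i j. B j i"]
    by (simp add: row_shift_def col_shift_def)
  also have "\<dots> = (\<lambda>i j. row_shift e c (dcomp e d (\<lambda>i j. A j i) (\<lambda>i j. B j i)) j i)"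
    by (simp only: dcomp_row_shift_left[OF assms])
  also have "\<dots> = col_shift e c (dcomp e d A B)"
    by (simp add: dcomp_transpose[of e d A B] row_shift_def col_shift_def)
  finally show ?thesis .
qed

theorem lemma3p3:
  fixes A B :: "nat \<Rightarrow> nat \<Rightarrow> 'a::field"
    and e l :: nat and d dinv :: int
  assumes "CHAR('a) = 0"
    and "e \<ge> 2"
    and "coprime d (int e)"
    and "(d * dinv) mod int e = 1"
    and "l \<le> e - 1"
  shows "mat_eq e (mat_mul e (mat_pow e (circ e) l) (dcomp e d A B))
                  (dcomp e d A (mat_mul e (mat_pow e (circ e) l) B))
       \<and> mat_eq e (dcomp e d A (mat_mul e (mat_pow e (circ e) l) B))
                  (dcomp e d (mat_mul e (circ_zpow e (- dinv * int l)) A) B)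
       \<and> mat_eq e (mat_mul e (dcomp e d A B) (mat_pow e (circ e) l))
                  (dcomp e d A (mat_mul e B (mat_pow e (circ e) l)))
       \<and> mat_eq e (dcomp e d A (mat_mul e B (mat_pow e (circ e) l)))
                  (dcomp e d (mat_mul e A (circ_zpow e (- dinv * int l))) B)"
proof -
  have "0 < e" using \<open>e \<ge> 2\<close> by simp
  let ?C = "dcomp e d A B"
  have "dcomp e d A (mat_mul e (mat_pow e (circ e) l) B) = row_shift e (int l) ?C"
    by (simp only: dcomp_cong[OF mat_eq_refl mat_mul_circ_pow_left] dcomp_row_shift_right)
  moreover have "dcomp e d (mat_mul e (circ_zpow e (- dinv * int l)) A) B = row_shift e (int l) ?C"
    by (simp only: dcomp_cong[OF mat_mul_circ_zpow_left mat_eq_refl]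
        dcomp_row_shift_left[OF \<open>0 < e\<close> assms(4)])
  moreover have "dcomp e d A (mat_mul e B (mat_pow e (circ e) l)) = col_shift e (- int l) ?C"
    by (simp only: dcomp_cong[OF mat_eq_refl mat_mul_circ_pow_right] dcomp_col_shift_right)
  moreover have "dcomp e d (mat_mul e A (circ_zpow e (- dinv * int l))) B = col_shift e (- int l) ?C"
  proof -
    have "- (- dinv * int l) = - dinv * (- int l)" by simp
    then show ?thesis
      by (simp only: dcomp_cong[OF mat_mul_circ_zpow_right mat_eq_refl]
          dcomp_col_shift_left[OF \<open>0 < e\<close> assms(4)])
  qed
  ultimately show ?thesis
    using mat_mul_circ_pow_left[of e l ?C] mat_mul_circ_pow_right[of e ?C l]
    by (simp add: mat_eq_def)
qed

end
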